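(* For $i\in\{1,\dots,m\}$ let $f_i:\mathbb{R}^n\to\mathbb{R}\cup\{\infty\}$ be proper, lower semicontinuous, convex, and bounded below. Let $r>0$, let $\delta:\Lambda\to\mathbb{R}$ be continuous with $\delta(e_i)=0$ for each canonical unit vector $e_i$ and $\delta(\lambda)>0$ otherwise, and let $PA_r(x,\lambda):=-e_{r+\delta(\lambda)}\big(-\sum_{i=1}^m\lambda_ie_rf_i\big)(x)$. Then for every $\lambda\in\Lambda$, $$\operatorname{argmin}_xPA_r(x,\lambda)=\operatorname{argmin}_x\sum_{i=1}^m\lambda_ie_rf_i(x)=\operatorname{argmin}_x\Big(-e_r\Big(-\sum_{i=1}^m\lambda_ie_rf_i\Big)(x)\Big).$$
   Context: $\Lambda=\{\lambda\in\mathbb{R}^m:\lambda_i\ge0,\ \sum_i\lambda_i=1\}$. Moreau envelope $e_rf(x)=\inf_y\{f(y)+\frac r2|y-x|^2\}$. *)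

theory Defs
  imports "HOL-Analysis.Analysis" "HOL-Library.Extended_Real"
begin

definition proper_fun :: "('a \<Rightarrow> ereal) \<Rightarrow> bool" where
  "proper_fun f \<longleftrightarrow> (\<forall>x. f x \<noteq> -\<infinity>) \<and> (\<exists>x. f x \<noteq> \<infinity>)"

definition lsc_fun :: "('a::topological_space \<Rightarrow> ereal) \<Rightarrow> bool" where
  "lsc_fun f \<longleftrightarrow> (\<forall>x. f x \<le> Liminf (at x) f)"

definition convex_efun :: "('a::real_vector \<Rightarrow> ereal) \<Rightarrow> bool" where
  "convex_efun f \<longleftrightarrow> (\<forall>x y t. 0 < t \<and> t < 1 \<longrightarrow>
      f ((1 - t) *\<^sub>R x + t *\<^sub>R y) \<le> ereal (1 - t) * f x + ereal t * f y)"

definition bounded_below_fun :: "('a \<Rightarrow> ereal) \<Rightarrow> bool" where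
  "bounded_below_fun f \<longleftrightarrow> (\<exists>c::real. \<forall>x. ereal c \<le> f x)"

definition moreau_env :: "real \<Rightarrow> ('a::real_normed_vector \<Rightarrow> ereal) \<Rightarrow> 'a \<Rightarrow> ereal" where
  "moreau_env r f x = (INF y. f y + ereal (r / 2 * (norm (y - x))\<^sup>2))"

definition argmin_set :: "('a \<Rightarrow> ereal) \<Rightarrow> 'a set" where
  "argmin_set \<phi> = {x. \<forall>y. \<phi> x \<le> \<phi> y}"

definition prob_simplex :: "(real^'m::finite) set" where
  "prob_simplex = {l. (\<forall>i. 0 \<le> l $ i) \<and> (\<Sum>i\<in>UNIV. l $ i) = 1}"

definition wsum_env :: "real \<Rightarrow> ('m::finite \<Rightarrow> 'a::real_normed_vector \<Rightarrow> ereal) \<Rightarrow> real^'m \<Rightarrow> 'a \<Rightarrow> ereal" where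
  "wsum_env r f l x = (\<Sum>i\<in>UNIV. ereal (l $ i) * moreau_env r (f i) x)"

definition PA :: "real \<Rightarrow> (real^'m::finite \<Rightarrow> real) \<Rightarrow> ('m \<Rightarrow> 'a::real_normed_vector \<Rightarrow> ereal) \<Rightarrow> 'a \<Rightarrow> real^'m \<Rightarrow> ereal" where
  "PA r \<delta> f x l = - moreau_env (r + \<delta> l) (\<lambda>y. - wsum_env r f l y) x"

end

theory Submission
  imports Defs
begin

text \<open>
  Write \<open>g = \<Sum>\<^sub>i \<lambda>\<^sub>i e\<^sub>r f\<^sub>i\<close> and \<open>G\<^sub>s = -e\<^sub>s(-g)\<close>, i.e. \<open>G\<^sub>s x = sup\<^sub>y g y - s/2 |y - x|\<^sup>2\<close>;
  then \<open>g \<le> G\<^sub>s\<close> and \<open>G\<^sub>s\<close> decreases in \<open>s\<close>. Each \<open>e\<^sub>r f\<^sub>i - r/2 |.|\<^sup>2\<close> is an infimum of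
  affine functions, so \<open>g - r/2 |.|\<^sup>2\<close> is concave, and at a minimiser \<open>p\<close> of \<open>g\<close> this gives
  \<open>g y - r/2 |y - p|\<^sup>2 \<le> g p\<close>, i.e. \<open>G\<^sub>r p = g p\<close>. Conversely, for any \<open>y\<close> the barycentre \<open>c\<close>
  of \<open>\<epsilon>\<close>-minimisers of the proximal problems of the \<open>f\<^sub>i\<close> at \<open>y\<close> satisfies
  \<open>G\<^sub>r c \<le> g y + \<epsilon>\<close> by the parallel-axis identity, so \<open>inf G\<^sub>r \<le> inf g\<close>. Hence \<open>G\<^sub>s\<close> and \<open>g\<close>
  have the same minimisers for every \<open>s \<ge> r\<close>, in particular for \<open>s = r + \<delta>(\<lambda>)\<close> and \<open>s = r\<close>.
\<close>

lemma moreau_env_le: "moreau_env r f x \<le> f z + ereal (r / 2 * (norm (z - x))\<^sup>2)"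
  unfolding moreau_env_def by (rule INF_lower) simp

lemma moreau_env_greatest:
  fixes f :: "'a::real_normed_vector \<Rightarrow> ereal"
  assumes "proper_fun f"
    and "\<And>z c. f z = ereal c \<Longrightarrow> b \<le> c + r / 2 * (norm (z - x))\<^sup>2"
  shows "ereal b \<le> moreau_env r f x"
  unfolding moreau_env_def
proof (rule INF_greatest)
  fix z
  show "ereal b \<le> f z + ereal (r / 2 * (norm (z - x))\<^sup>2)"
  proof (cases "f z")
    case (real c)
    then show ?thesis using assms(2)[of z c] by simp
  qed (use assms(1) in \<open>auto simp: proper_fun_def\<close>)
qed

lemma moreau_env_finite:
  fixes f :: "'a::real_normed_vector \<Rightarrow> ereal"
  assumes "proper_fun f" "bounded_below_fun f" "r \<ge> 0"
  shows "\<bar>moreau_env r f x\<bar> \<noteq> \<infinity>"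
proof -
  obtain b where b: "\<And>z. ereal b \<le> f z"
    using assms(2) unfolding bounded_below_fun_def by blast
  obtain z where "f z \<noteq> \<infinity>" "f z \<noteq> -\<infinity>"
    using assms(1) unfolding proper_fun_def by blast
  then have "moreau_env r f x < \<infinity>"
    using moreau_env_le[of r f x z] by (auto simp: less_top[symmetric])
  moreover have "ereal b \<le> moreau_env r f x"
  proof (rule moreau_env_greatest[OF assms(1)])
    fix z c assume "f z = ereal c"
    then have "b \<le> c" using b[of z] by simp
    moreover have "0 \<le> r / 2 * (norm (z - x))\<^sup>2" using assms(3) by simp
    ultimately show "b \<le> c + r / 2 * (norm (z - x))\<^sup>2" by linarith
  qed
  ultimately show ?thesis by auto
qed

lemma moreau_env_approx:
  fixes f :: "'a::real_normed_vector \<Rightarrow> ereal"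
  assumes "proper_fun f" "moreau_env r f x < ereal b"
  obtains z c where "f z = ereal c" "c + r / 2 * (norm (z - x))\<^sup>2 < b"
proof -
  obtain z where z: "f z + ereal (r / 2 * (norm (z - x))\<^sup>2) < ereal b"
    using assms(2) unfolding moreau_env_def INF_less_iff by blast
  moreover have "f z \<noteq> -\<infinity>" using assms(1) unfolding proper_fun_def by blast
  ultimately obtain c where "f z = ereal c" by (cases "f z") auto
  with z show ?thesis using that by auto
qed

lemma moreau_env_minus_sq_concave:
  fixes f :: "'a::real_inner \<Rightarrow> ereal"
  assumes "proper_fun f" and env: "\<And>x. moreau_env r f x = ereal (E x)"
  shows "concave_on UNIV (\<lambda>x. E x - r / 2 * (norm x)\<^sup>2)"
proof -
  have sq_dist: "r / 2 * (norm (z - x))\<^sup>2 = r / 2 * (norm x)\<^sup>2 + r / 2 * (norm z)\<^sup>2 - r * (z \<bullet> x)"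
    for z x :: 'a
    by (simp add: power2_norm_eq_inner inner_diff_left inner_diff_right inner_commute algebra_simps)
  \<comment> \<open>\<open>E x - r/2 |x|\<^sup>2\<close> is the infimum over \<open>z\<close> of the affine functions \<open>f z + r/2 |z|\<^sup>2 - r z\<bullet>x\<close>.\<close>
  have affine_bound: "E x - r / 2 * (norm x)\<^sup>2 \<le> c + r / 2 * (norm z)\<^sup>2 - r * (z \<bullet> x)"
    if "f z = ereal c" for x z c
    using moreau_env_le[of r f x z] env[of x] that sq_dist[of z x]
    by (simp add: algebra_simps)
  show ?thesis
    unfolding concave_on_iff
  proof (intro conjI convex_UNIV ballI allI impI)
    fix a b :: 'a and u v :: real
    assume uv: "0 \<le> u" "0 \<le> v" "u + v = 1"
    define x where "x = u *\<^sub>R a + v *\<^sub>R b"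
    have "ereal (u * (E a - r / 2 * (norm a)\<^sup>2) + v * (E b - r / 2 * (norm b)\<^sup>2)
        + r / 2 * (norm x)\<^sup>2) \<le> moreau_env r f x"
    proof (rule moreau_env_greatest[OF assms(1)])
      fix z c assume fz: "f z = ereal c"
      have "u * (E a - r / 2 * (norm a)\<^sup>2) + v * (E b - r / 2 * (norm b)\<^sup>2)
          \<le> u * (c + r / 2 * (norm z)\<^sup>2 - r * (z \<bullet> a)) + v * (c + r / 2 * (norm z)\<^sup>2 - r * (z \<bullet> b))"
        using uv affine_bound[OF fz] by (intro add_mono mult_left_mono) auto
      also have "\<dots> = (u + v) * (c + r / 2 * (norm z)\<^sup>2) - r * (u * (z \<bullet> a) + v * (z \<bullet> b))"
        by (simp add: algebra_simps)
      also have "\<dots> = c + r / 2 * (norm z)\<^sup>2 - r * (z \<bullet> x)"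
        using uv(3) by (simp add: x_def inner_add_right)
      also have "\<dots> = c + r / 2 * (norm (z - x))\<^sup>2 - r / 2 * (norm x)\<^sup>2"
        using sq_dist[of z x] by linarith
      finally show "u * (E a - r / 2 * (norm a)\<^sup>2) + v * (E b - r / 2 * (norm b)\<^sup>2)
          + r / 2 * (norm x)\<^sup>2 \<le> c + r / 2 * (norm (z - x))\<^sup>2"
        by simp
    qed
    then show "u * (E a - r / 2 * (norm a)\<^sup>2) + v * (E b - r / 2 * (norm b)\<^sup>2)
        \<le> E (u *\<^sub>R a + v *\<^sub>R b) - r / 2 * (norm (u *\<^sub>R a + v *\<^sub>R b))\<^sup>2"
      using env[of x] by (simp add: x_def)
  qed
qed

lemma concave_on_sum_fun:
  assumes "finite I" "convex S" "\<And>i. i \<in> I \<Longrightarrow> concave_on S (f i)"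
  shows "concave_on S (\<lambda>x. \<Sum>i\<in>I. f i x)"
  using assms by (induction I rule: finite_induct) (auto intro: concave_on_add simp: concave_on_const)

lemma weighted_moreau_env_minus_sq_concave:
  fixes f :: "'i::finite \<Rightarrow> 'a::real_inner \<Rightarrow> ereal"
  assumes "\<And>i. proper_fun (f i)" "\<And>i x. moreau_env r (f i) x = ereal (E i x)"
    and "\<And>i. 0 \<le> w i" "sum w UNIV = 1"
  shows "concave_on UNIV (\<lambda>x. (\<Sum>i\<in>UNIV. w i * E i x) - r / 2 * (norm x)\<^sup>2)"
proof -
  have "(\<Sum>i\<in>UNIV. w i * (E i x - c)) = (\<Sum>i\<in>UNIV. w i * E i x) - c" for x c
    using assms(4) by (simp add: right_diff_distrib sum_subtractf flip: sum_distrib_right)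
  moreover have "concave_on UNIV (\<lambda>x. \<Sum>i\<in>UNIV. w i * (E i x - r / 2 * (norm x)\<^sup>2))"
    by (intro concave_on_sum_fun concave_on_cmul moreau_env_minus_sq_concave[OF assms(1,2)] assms(3))
      auto
  ultimately show ?thesis by (simp only:)
qed

lemma concave_on_extrapolate:
  fixes \<psi> :: "'a::real_vector \<Rightarrow> real"
  assumes concave: "concave_on UNIV \<psi>" and "t \<ge> 0"
  shows "\<psi> (p - t *\<^sub>R (y - p)) + t * \<psi> y \<le> (1 + t) * \<psi> p"
proof -
  define u where "u = t / (1 + t)"
  define q where "q = p - t *\<^sub>R (y - p)"
  have u: "0 \<le> u" "u \<le> 1" "(1 - u) * (1 + t) = 1" "u * (1 + t) = t"
    using \<open>t \<ge> 0\<close> by (auto simp: u_def field_simps)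
  have "u - (1 - u) * t = 0" using u(4) by (simp add: algebra_simps)
  moreover have "(1 - u) *\<^sub>R q + u *\<^sub>R y = ((1 - u) * (1 + t)) *\<^sub>R p + (u - (1 - u) * t) *\<^sub>R y"
    by (simp add: q_def algebra_simps)
  ultimately have "(1 - u) *\<^sub>R q + u *\<^sub>R y = p"
    using u(3) by simp
  then have concave_at_p: "(1 - u) * \<psi> q + u * \<psi> y \<le> \<psi> p"
    using concave_onD[OF concave, of u q y] u(1,2) by simp
  have "\<psi> q + t * \<psi> y = ((1 - u) * (1 + t)) * \<psi> q + (u * (1 + t)) * \<psi> y"
    using u(3,4) by simp
  also have "\<dots> = (1 + t) * ((1 - u) * \<psi> q + u * \<psi> y)"
    by (simp add: algebra_simps)
  also have "\<dots> \<le> (1 + t) * \<psi> p"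
    using concave_at_p \<open>t \<ge> 0\<close> by (intro mult_left_mono) auto
  finally show ?thesis by (simp add: q_def)
qed

lemma le_of_le_add_mult_pos:
  fixes a b k :: real
  assumes "\<And>t. t > 0 \<Longrightarrow> a \<le> b + t * k"
  shows "a \<le> b"
proof -
  have "((\<lambda>t. b + t * k) \<longlongrightarrow> b + 0 * k) (at_right 0)"
    by (intro tendsto_intros)
  moreover have "\<forall>\<^sub>F t in at_right 0. a \<le> b + t * k"
    using eventually_at_right_less[of 0] by eventually_elim (rule assms)
  ultimately show ?thesis
    using tendsto_le[OF trivial_limit_at_right_real _ tendsto_const] by simp
qed

lemma semiconcave_min_sq_bound:
  fixes g :: "'a::real_inner \<Rightarrow> real"
  assumes concave: "concave_on UNIV (\<lambda>x. g x - r / 2 * (norm x)\<^sup>2)"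
    and min: "\<And>x. g p \<le> g x"
  shows "g y - r / 2 * (norm (y - p))\<^sup>2 \<le> g p"
proof (rule le_of_le_add_mult_pos)
  fix t :: real
  assume "t > 0"
  define v where "v = y - p"
  define q where "q = p - t *\<^sub>R v"
  let ?\<psi> = "\<lambda>x. g x - r / 2 * (norm x)\<^sup>2"
  have "?\<psi> q + t * ?\<psi> y \<le> (1 + t) * ?\<psi> p"
    unfolding q_def v_def using concave_on_extrapolate[OF concave] \<open>t > 0\<close> by simp
  moreover have norm_q: "(norm q)\<^sup>2 = (norm p)\<^sup>2 - 2 * t * (p \<bullet> v) + t\<^sup>2 * (norm v)\<^sup>2"
    and norm_y: "(norm y)\<^sup>2 = (norm p)\<^sup>2 + 2 * (p \<bullet> v) + (norm v)\<^sup>2"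
    unfolding q_def v_def power2_norm_eq_inner
    by (simp_all add: inner_diff_left inner_diff_right inner_commute power2_eq_square algebra_simps)
  then have "(1 + t) * ?\<psi> p - (?\<psi> q + t * ?\<psi> y)
      = (g p - g q) + t * (g p + t * (r / 2 * (norm v)\<^sup>2)) - t * (g y - r / 2 * (norm v)\<^sup>2)"
    unfolding norm_q norm_y by (simp add: algebra_simps power2_eq_square)
  ultimately have "t * (g y - r / 2 * (norm v)\<^sup>2) \<le> t * (g p + t * (r / 2 * (norm v)\<^sup>2))"
    using min[of q] by linarith
  then show "g y - r / 2 * (norm (y - p))\<^sup>2 \<le> g p + t * (r / 2 * (norm (y - p))\<^sup>2)"
    using \<open>t > 0\<close> by (simp add: v_def)
qed

definition upper_moreau_env :: "real \<Rightarrow> ('a::real_normed_vector \<Rightarrow> real) \<Rightarrow> 'a \<Rightarrow> ereal" where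
  "upper_moreau_env s g x = - moreau_env s (\<lambda>y. - ereal (g y)) x"

lemma le_upper_moreau_env: "ereal (g x) \<le> upper_moreau_env s g x"
proof -
  have "moreau_env s (\<lambda>y. - ereal (g y)) x \<le> - ereal (g x)"
    using moreau_env_le[of s "\<lambda>y. - ereal (g y)" x x] by simp
  then show ?thesis by (metis upper_moreau_env_def ereal_minus_le_minus ereal_uminus_uminus)
qed

lemma upper_moreau_env_antimono:
  assumes "r \<le> s"
  shows "upper_moreau_env s g x \<le> upper_moreau_env r g x"
proof -
  have "moreau_env r (\<lambda>y. - ereal (g y)) x \<le> moreau_env s (\<lambda>y. - ereal (g y)) x"
    unfolding moreau_env_def
  proof (rule INF_mono)
    fix y
    show "\<exists>z\<in>UNIV. - ereal (g z) + ereal (r / 2 * (norm (z - x))\<^sup>2)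
        \<le> - ereal (g y) + ereal (s / 2 * (norm (y - x))\<^sup>2)"
      using assms by (intro bexI[of _ y]) (auto intro: mult_right_mono)
  qed
  then show ?thesis by (simp add: upper_moreau_env_def)
qed

lemma upper_moreau_env_le:
  assumes "\<And>y. g y - s / 2 * (norm (y - x))\<^sup>2 \<le> b"
  shows "upper_moreau_env s g x \<le> ereal b"
proof -
  have "ereal (- b) \<le> moreau_env s (\<lambda>y. - ereal (g y)) x"
    unfolding moreau_env_def
  proof (rule INF_greatest)
    fix y
    show "ereal (- b) \<le> - ereal (g y) + ereal (s / 2 * (norm (y - x))\<^sup>2)"
      using assms[of y] by simp
  qed
  then show ?thesis by (simp add: upper_moreau_env_def ereal_uminus_le_reorder)
qed

lemma argmin_upper_moreau_env:
  fixes g :: "'a::real_normed_vector \<Rightarrow> real"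
  assumes at_min: "\<And>p. p \<in> argmin_set (\<lambda>x. ereal (g x)) \<Longrightarrow> upper_moreau_env r g p \<le> ereal (g p)"
    and inf_le: "\<And>y \<epsilon>. \<epsilon> > 0 \<Longrightarrow> \<exists>c. upper_moreau_env r g c \<le> ereal (g y + \<epsilon>)"
    and "r \<le> s"
  shows "argmin_set (upper_moreau_env s g) = argmin_set (\<lambda>x. ereal (g x))"
proof (intro set_eqI iffI)
  fix p
  assume p: "p \<in> argmin_set (\<lambda>x. ereal (g x))"
  have "upper_moreau_env s g p \<le> upper_moreau_env s g y" for y
  proof -
    have "upper_moreau_env s g p \<le> upper_moreau_env r g p"
      by (rule upper_moreau_env_antimono[OF \<open>r \<le> s\<close>])
    also have "\<dots> \<le> ereal (g p)" by (rule at_min[OF p])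
    also have "\<dots> \<le> ereal (g y)" using p by (simp add: argmin_set_def)
    also have "\<dots> \<le> upper_moreau_env s g y" by (rule le_upper_moreau_env)
    finally show ?thesis .
  qed
  then show "p \<in> argmin_set (upper_moreau_env s g)"
    by (simp add: argmin_set_def)
next
  fix p
  assume p: "p \<in> argmin_set (upper_moreau_env s g)"
  have "g p \<le> g y + \<epsilon>" if "\<epsilon> > 0" for y \<epsilon>
  proof -
    obtain c where c: "upper_moreau_env r g c \<le> ereal (g y + \<epsilon>)"
      using inf_le[OF \<open>\<epsilon> > 0\<close>] by blast
    have "ereal (g p) \<le> upper_moreau_env s g p" by (rule le_upper_moreau_env)
    also have "\<dots> \<le> upper_moreau_env s g c" using p by (simp add: argmin_set_def)
    also have "\<dots> \<le> upper_moreau_env r g c" by (rule upper_moreau_env_antimono[OF \<open>r \<le> s\<close>])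
    also have "\<dots> \<le> ereal (g y + \<epsilon>)" by (rule c)
    finally show ?thesis by simp
  qed
  then show "p \<in> argmin_set (\<lambda>x. ereal (g x))"
    by (auto simp: argmin_set_def intro: field_le_epsilon)
qed

lemma weighted_sq_dist_centroid:
  fixes z :: "'i \<Rightarrow> 'a::real_inner"
  assumes "finite I" "sum w I = 1"
  defines "c \<equiv> \<Sum>i\<in>I. w i *\<^sub>R z i"
  shows "(\<Sum>i\<in>I. w i * (norm (z i - y))\<^sup>2)
    = (\<Sum>i\<in>I. w i * (norm (z i - c))\<^sup>2) + (norm (c - y))\<^sup>2"
proof -
  have split: "(norm (z i - y))\<^sup>2 = (norm (z i - c))\<^sup>2 + 2 * ((z i - c) \<bullet> (c - y)) + (norm (c - y))\<^sup>2"
    for i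
    using dot_norm[of "z i - c" "c - y"] by simp
  have "(\<Sum>i\<in>I. w i *\<^sub>R (z i - c)) = c - sum w I *\<^sub>R c"
    by (simp add: c_def scaleR_diff_right sum_subtractf scaleR_sum_left)
  then have "(\<Sum>i\<in>I. w i * ((z i - c) \<bullet> (c - y))) = 0"
    using assms(2) by (simp flip: inner_scaleR_left inner_sum_left)
  moreover have "(\<Sum>i\<in>I. w i * (norm (z i - y))\<^sup>2)
      = (\<Sum>i\<in>I. w i * (norm (z i - c))\<^sup>2) + 2 * (\<Sum>i\<in>I. w i * ((z i - c) \<bullet> (c - y)))
        + sum w I * (norm (c - y))\<^sup>2"
    by (simp only: split ring_distribs mult.left_commute[of "w _" 2] sum.distrib
        flip: sum_distrib_left sum_distrib_right)
  ultimately show ?thesis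
    using assms(2) by simp
qed

lemma weighted_moreau_env_le_barycentre:
  fixes f :: "'i::finite \<Rightarrow> 'a::real_inner \<Rightarrow> ereal"
  assumes env: "\<And>i x. moreau_env r (f i) x = ereal (E i x)" and za: "\<And>i. f i (z i) = ereal (a i)"
    and w: "\<And>i. 0 \<le> w i" "sum w UNIV = 1"
  defines "c \<equiv> \<Sum>i\<in>UNIV. w i *\<^sub>R z i"
  shows "(\<Sum>i\<in>UNIV. w i * E i x)
    \<le> (\<Sum>i\<in>UNIV. w i * a i) + r / 2 * (\<Sum>i\<in>UNIV. w i * (norm (z i - c))\<^sup>2) + r / 2 * (norm (x - c))\<^sup>2"
proof -
  have "E i x \<le> a i + r / 2 * (norm (z i - x))\<^sup>2" for i
    using moreau_env_le[of r "f i" x "z i"] env[of i x] za[of i] by simp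
  then have "(\<Sum>i\<in>UNIV. w i * E i x) \<le> (\<Sum>i\<in>UNIV. w i * (a i + r / 2 * (norm (z i - x))\<^sup>2))"
    using w(1) by (intro sum_mono mult_left_mono)
  also have "\<dots> = (\<Sum>i\<in>UNIV. w i * a i) + r / 2 * (\<Sum>i\<in>UNIV. w i * (norm (z i - x))\<^sup>2)"
    by (simp add: sum.distrib sum_distrib_left algebra_simps)
  also have "\<dots> = (\<Sum>i\<in>UNIV. w i * a i) + r / 2 * (\<Sum>i\<in>UNIV. w i * (norm (z i - c))\<^sup>2)
      + r / 2 * (norm (x - c))\<^sup>2"
    using weighted_sq_dist_centroid[OF finite w(2), where z = z and y = x]
    by (simp add: c_def norm_minus_commute algebra_simps)
  finally show ?thesis .
qed

lemma weighted_moreau_env_upper_approx: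
  fixes f :: "'i::finite \<Rightarrow> 'a::real_inner \<Rightarrow> ereal"
  assumes "\<And>i. proper_fun (f i)" and env: "\<And>i x. moreau_env r (f i) x = ereal (E i x)"
    and w: "\<And>i. 0 \<le> w i" "sum w UNIV = 1" and "r \<ge> 0" "\<epsilon> > 0"
  obtains c where "upper_moreau_env r (\<lambda>x. \<Sum>i\<in>UNIV. w i * E i x) c
    \<le> ereal ((\<Sum>i\<in>UNIV. w i * E i y) + \<epsilon>)"
proof -
  have "\<exists>z a. f i z = ereal a \<and> a + r / 2 * (norm (z - y))\<^sup>2 < E i y + \<epsilon>" for i
  proof -
    have "moreau_env r (f i) y < ereal (E i y + \<epsilon>)" using env[of i y] \<open>\<epsilon> > 0\<close> by simp
    then obtain z a where "f i z = ereal a" "a + r / 2 * (norm (z - y))\<^sup>2 < E i y + \<epsilon>"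
      by (rule moreau_env_approx[OF assms(1)])
    then show ?thesis by blast
  qed
  then obtain z a where za: "\<And>i. f i (z i) = ereal (a i)"
    and near_min: "\<And>i. a i + r / 2 * (norm (z i - y))\<^sup>2 < E i y + \<epsilon>"
    by metis
  define c where "c = (\<Sum>i\<in>UNIV. w i *\<^sub>R z i)"
  have "r / 2 * (\<Sum>i\<in>UNIV. w i * (norm (z i - c))\<^sup>2) \<le> r / 2 * (\<Sum>i\<in>UNIV. w i * (norm (z i - y))\<^sup>2)"
    using weighted_sq_dist_centroid[OF finite w(2), where z = z and y = y] \<open>r \<ge> 0\<close>
    by (simp add: c_def mult_left_mono)
  then have "(\<Sum>i\<in>UNIV. w i * E i x) - r / 2 * (norm (x - c))\<^sup>2
      \<le> (\<Sum>i\<in>UNIV. w i * a i) + r / 2 * (\<Sum>i\<in>UNIV. w i * (norm (z i - y))\<^sup>2)" for x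
    using weighted_moreau_env_le_barycentre[where E = E and x = x, OF env za w]
    unfolding c_def by linarith
  also have "\<dots> = (\<Sum>i\<in>UNIV. w i * (a i + r / 2 * (norm (z i - y))\<^sup>2))"
    by (simp add: sum.distrib sum_distrib_left algebra_simps)
  also have "\<dots> \<le> (\<Sum>i\<in>UNIV. w i * (E i y + \<epsilon>))"
    using w(1) by (intro sum_mono mult_left_mono less_imp_le[OF near_min])
  also have "\<dots> = (\<Sum>i\<in>UNIV. w i * E i y) + \<epsilon>"
    using w(2) by (simp add: distrib_left sum.distrib flip: sum_distrib_right)
  finally show ?thesis
    by (intro that upper_moreau_env_le)
qed

lemma argmin_upper_moreau_env_wsum:
  fixes f :: "'m::finite \<Rightarrow> 'a::real_inner \<Rightarrow> ereal"
  assumes proper: "\<And>i. proper_fun (f i)" and "\<And>i. bounded_below_fun (f i)"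
    and "r \<ge> 0" "l \<in> prob_simplex" "r \<le> s"
  shows "argmin_set (\<lambda>x. - moreau_env s (\<lambda>y. - wsum_env r f l y) x) = argmin_set (wsum_env r f l)"
proof -
  have l: "\<And>i. 0 \<le> l $ i" "(\<Sum>i\<in>UNIV. l $ i) = 1"
    using assms(4) unfolding prob_simplex_def by auto
  define E where "E i x = real_of_ereal (moreau_env r (f i) x)" for i x
  have env: "moreau_env r (f i) x = ereal (E i x)" for i x
    unfolding E_def using moreau_env_finite[OF proper assms(2,3)] by (simp add: ereal_real')
  define g where "g = (\<lambda>x. \<Sum>i\<in>UNIV. l $ i * E i x)"
  have wsum: "wsum_env r f l = (\<lambda>x. ereal (g x))"
    by (simp add: fun_eq_iff wsum_env_def env g_def)
  have concave: "concave_on UNIV (\<lambda>x. g x - r / 2 * (norm x)\<^sup>2)"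
    unfolding g_def by (rule weighted_moreau_env_minus_sq_concave[OF proper env l])
  have "argmin_set (upper_moreau_env s g) = argmin_set (\<lambda>x. ereal (g x))"
  proof (rule argmin_upper_moreau_env[OF _ _ \<open>r \<le> s\<close>])
    fix p
    assume "p \<in> argmin_set (\<lambda>x. ereal (g x))"
    then show "upper_moreau_env r g p \<le> ereal (g p)"
      using concave by (auto simp: argmin_set_def intro!: upper_moreau_env_le semiconcave_min_sq_bound)
  next
    fix y and \<epsilon> :: real
    assume "\<epsilon> > 0"
    then obtain c where "upper_moreau_env r g c \<le> ereal (g y + \<epsilon>)"
      using weighted_moreau_env_upper_approx[where E = E and y = y,
          OF proper env l \<open>r \<ge> 0\<close> \<open>\<epsilon> > 0\<close>]
      unfolding g_def by blast
    then show "\<exists>c. upper_moreau_env r g c \<le> ereal (g y + \<epsilon>)" by blast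
  qed
  then show ?thesis
    by (simp add: wsum upper_moreau_env_def[abs_def])
qed

theorem mainTheorem6:
  fixes f :: "'m::finite \<Rightarrow> (real^'n::finite) \<Rightarrow> ereal"
    and r :: real and \<delta> :: "real^'m \<Rightarrow> real" and l :: "real^'m"
  assumes "\<And>i. proper_fun (f i)" "\<And>i. lsc_fun (f i)" "\<And>i. convex_efun (f i)"
    "\<And>i. bounded_below_fun (f i)"
    and "r > 0"
    and "continuous_on prob_simplex \<delta>"
    and "\<And>i. \<delta> (axis i 1) = 0"
    and "\<And>\<mu>. \<mu> \<in> prob_simplex \<Longrightarrow> \<mu> \<notin> range (\<lambda>i. axis i 1) \<Longrightarrow> \<delta> \<mu> > 0"
    and "l \<in> prob_simplex"
  shows "argmin_set (\<lambda>x. PA r \<delta> f x l) = argmin_set (wsum_env r f l)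
       \<and> argmin_set (wsum_env r f l)
         = argmin_set (\<lambda>x. - moreau_env r (\<lambda>y. - wsum_env r f l y) x)"
proof -
  have "0 \<le> \<delta> l"
    using assms(7) assms(8)[OF assms(9)] by (cases "l \<in> range (\<lambda>i. axis i 1)") force+
  then have "r \<le> r + \<delta> l" by simp
  have "0 \<le> r" using \<open>r > 0\<close> by simp
  note argmin = argmin_upper_moreau_env_wsum[OF assms(1,4) \<open>0 \<le> r\<close> assms(9)]
  show ?thesis
    unfolding PA_def using argmin[OF \<open>r \<le> r + \<delta> l\<close>] argmin[OF order_refl] by simp
qed

end
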